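(* Let $F$ be a diagonal free self-map of $\mathbb{T}^n$. Then $\mathcal{S}(F)$ contains a Hilbert ball $B_H(z,r)$ with $z\in\mathbb{R}^n$ and $r>0$ if and only if $\underline{\mathrm{cw}}(F)>0$. Moreover, in that case, \[ \sup\{r\ge 0 : \exists z\in\mathbb{R}^n,\ B_H(z,r)\subseteq\mathcal{S}(F)\} = \underline{\mathrm{cw}}(F). \]
   Context: $\mathbb{T}=\mathbb{R}\cup\{-\infty\}$, ordered entrywise on $\mathbb{T}^n$. A self-map $F$ of $\mathbb{T}^n$ is order-preserving if $x\le y\Rightarrow F(x)\le F(y)$, and additively homogeneous if $F(\lambda+x)=\lambda+F(x)$ for all $\lambda\in\mathbb{T}$, $x\in\mathbb{T}^n$. An order-preserving, additively homogeneous self-map $F$ of $\mathbb{T}^n$ is diagonal free if for every $i$ and all $x,y\in\mathbb{R}^n$ with $x_j=y_j$ for all $j\ne i$, $F_i(x)=F_i(y)$. $\mathbf{t}(x)=\max_i x_i$, $\mathbf{b}(x)=\min_i x_i$, $\|x\|_H=\mathbf{t}(x)-\mathbf{b}(x)$ on $\mathbb{R}^n$, $B_H(z,r)=\{x\in\mathbb{R}^n: \|x-z\|_H\le r\}$. $\mathcal{S}(F)=\{x\in\mathbb{T}^n: x\le F(x)\}$. The lower Collatz–Wielandt number is $\underline{\mathrm{cw}}(F)=\sup\{\mu\in\mathbb{R}: \exists z\in\mathbb{R}^n,\ F(z)\ge\mu+z\}$. *)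

theory Defs
  imports "HOL-Analysis.Analysis"
begin

text \<open>The tropical semifield T = R \<union> {-\<infinity>} is represented inside ereal as the
values different from \<infinity>; points of T^n are functions 'n \<Rightarrow> ereal (with 'n a
finite index type) none of whose entries is \<infinity>.\<close>

definition Tn :: "('n::finite \<Rightarrow> ereal) set" where
  "Tn = {x. \<forall>i. x i \<noteq> \<infinity>}"

definition order_preserving :: "(('n::finite \<Rightarrow> ereal) \<Rightarrow> ('n \<Rightarrow> ereal)) \<Rightarrow> bool" where
  "order_preserving F \<longleftrightarrow> (\<forall>x\<in>Tn. \<forall>y\<in>Tn. x \<le> y \<longrightarrow> F x \<le> F y)"

definition additively_homogeneous :: "(('n::finite \<Rightarrow> ereal) \<Rightarrow> ('n \<Rightarrow> ereal)) \<Rightarrow> bool" where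
  "additively_homogeneous F \<longleftrightarrow>
     (\<forall>l. l \<noteq> \<infinity> \<longrightarrow> (\<forall>x\<in>Tn. F (\<lambda>i. l + x i) = (\<lambda>i. l + F x i)))"

definition self_map_Tn :: "(('n::finite \<Rightarrow> ereal) \<Rightarrow> ('n \<Rightarrow> ereal)) \<Rightarrow> bool" where
  "self_map_Tn F \<longleftrightarrow> (\<forall>x\<in>Tn. F x \<in> Tn)"

definition emb :: "('n \<Rightarrow> real) \<Rightarrow> ('n \<Rightarrow> ereal)" where
  "emb x = (\<lambda>i. ereal (x i))"

definition diagonal_free :: "(('n::finite \<Rightarrow> ereal) \<Rightarrow> ('n \<Rightarrow> ereal)) \<Rightarrow> bool" where
  "diagonal_free F \<longleftrightarrow> self_map_Tn F \<and> order_preserving F \<and> additively_homogeneous F \<and>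
     (\<forall>i. \<forall>x y :: 'n \<Rightarrow> real. (\<forall>j. j \<noteq> i \<longrightarrow> x j = y j) \<longrightarrow> F (emb x) i = F (emb y) i)"

definition top_v :: "('n::finite \<Rightarrow> real) \<Rightarrow> real" where
  "top_v x = Max (range x)"

definition bot_v :: "('n::finite \<Rightarrow> real) \<Rightarrow> real" where
  "bot_v x = Min (range x)"

definition hilbert_norm :: "('n::finite \<Rightarrow> real) \<Rightarrow> real" where
  "hilbert_norm x = top_v x - bot_v x"

definition hilbert_ball :: "('n::finite \<Rightarrow> real) \<Rightarrow> real \<Rightarrow> ('n \<Rightarrow> real) set" where
  "hilbert_ball z r = {x. hilbert_norm (x - z) \<le> r}"

definition subeig :: "(('n::finite \<Rightarrow> ereal) \<Rightarrow> ('n \<Rightarrow> ereal)) \<Rightarrow> ('n \<Rightarrow> ereal) set" where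
  "subeig F = {x\<in>Tn. x \<le> F x}"

text \<open>Lower Collatz--Wielandt number; the supremum is taken in ereal
(so it is -\<infinity> if no such \<mu> exists).\<close>
definition lower_cw :: "(('n::finite \<Rightarrow> ereal) \<Rightarrow> ('n \<Rightarrow> ereal)) \<Rightarrow> ereal" where
  "lower_cw F = Sup (ereal ` {\<mu>::real. \<exists>z::'n \<Rightarrow> real. (\<lambda>i. ereal (\<mu> + z i)) \<le> F (emb z)})"

end

theory Submission
  imports Defs
begin

text \<open>For a diagonal free map the \<open>i\<close>-th inequality \<open>x\<^sub>i \<le> F\<^sub>i(x)\<close> only involves \<open>x\<^sub>i\<close> and the
  coordinates \<open>x\<^sub>j\<close>, \<open>j \<noteq> i\<close>, on which \<open>F\<^sub>i\<close> is monotone and additively homogeneous.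
  Hence the worst point of the Hilbert ball \<open>B\<^sub>H(z,r)\<close> for coordinate \<open>i\<close> is \<open>z - r\<close> with its
  \<open>i\<close>-th entry raised back to \<open>z\<^sub>i\<close>, and \<open>B\<^sub>H(z,r) \<subseteq> \<S>(F)\<close> holds exactly when \<open>r + z \<le> F(z)\<close>.
  The admissible radii are therefore the nonnegative elements of the set whose supremum
  defines \<open>cw(F)\<close>, and discarding negative elements does not change a positive supremum.\<close>

lemma emb_in_Tn: "emb x \<in> Tn"
  by (simp add: Tn_def emb_def)

lemma hilbert_norm_le_iff:
  fixes x :: "'n::finite \<Rightarrow> real"
  shows "hilbert_norm x \<le> r \<longleftrightarrow> (\<forall>i j. x i - x j \<le> r)"
proof (intro iffI allI)
  fix i j
  assume "hilbert_norm x \<le> r"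
  moreover have "x i \<le> Max (range x)" "Min (range x) \<le> x j"
    by simp_all
  ultimately show "x i - x j \<le> r"
    unfolding hilbert_norm_def top_v_def bot_v_def by linarith
next
  assume le: "\<forall>i j. x i - x j \<le> r"
  have "Max (range x) \<in> range x" "Min (range x) \<in> range x"
    by simp_all
  then obtain i j where "Max (range x) = x i" "Min (range x) = x j"
    by (metis imageE)
  with le show "hilbert_norm x \<le> r"
    unfolding hilbert_norm_def top_v_def bot_v_def by metis
qed

lemma diagonal_free_shift:
  assumes F: "diagonal_free F"
    and off_diag: "\<And>j. j \<noteq> i \<Longrightarrow> x j = c + z j"
  shows "F (emb x) i = ereal c + F (emb z) i"
proof -
  have "F (emb x) i = F (emb (\<lambda>j. c + z j)) i"
    using F off_diag unfolding diagonal_free_def by simp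
  also have "emb (\<lambda>j. c + z j) = (\<lambda>j. ereal c + emb z j)"
    by (simp add: emb_def)
  also have "F \<dots> = (\<lambda>j. ereal c + F (emb z) j)"
    using F emb_in_Tn[of z] unfolding diagonal_free_def additively_homogeneous_def by simp
  finally show ?thesis .
qed

lemma hilbert_ball_subset_subeig_iff:
  fixes F :: "('n::finite \<Rightarrow> ereal) \<Rightarrow> ('n \<Rightarrow> ereal)"
  assumes F: "diagonal_free F" and "r \<ge> 0"
  shows "emb ` hilbert_ball z r \<subseteq> subeig F \<longleftrightarrow> (\<lambda>i. ereal (r + z i)) \<le> F (emb z)"
proof
  assume ball: "emb ` hilbert_ball z r \<subseteq> subeig F"
  show "(\<lambda>i. ereal (r + z i)) \<le> F (emb z)"
  proof (rule le_funI)
    fix i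
    define x where "x = (\<lambda>j. if j = i then z i else z j - r)"
    have "x \<in> hilbert_ball z r"
      using \<open>r \<ge> 0\<close> by (auto simp: hilbert_ball_def hilbert_norm_le_iff x_def)
    then have "emb x \<le> F (emb x)"
      using ball by (auto simp: subeig_def)
    moreover have "emb x i = ereal (z i)"
      by (simp add: emb_def x_def)
    ultimately have "ereal (z i) \<le> F (emb x) i"
      by (metis le_funD)
    also have "F (emb x) i = ereal (- r) + F (emb z) i"
      by (rule diagonal_free_shift[OF F]) (simp add: x_def)
    finally show "ereal (r + z i) \<le> F (emb z) i"
      by (cases "F (emb z) i") auto
  qed
next
  assume eig: "(\<lambda>i. ereal (r + z i)) \<le> F (emb z)"
  have "emb x \<le> F (emb x)" if "x \<in> hilbert_ball z r" for x
  proof (rule le_funI)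
    fix i
    define t where "t = x i - z i - r"
    define y where "y = (\<lambda>j. if j = i then x i else t + z j)"
    have "emb y \<le> emb x"
    proof (rule le_funI)
      fix j
      have "(x - z) i - (x - z) j \<le> r"
        using that by (simp only: hilbert_ball_def hilbert_norm_le_iff mem_Collect_eq)
      then show "emb y j \<le> emb x j"
        by (simp add: emb_def y_def t_def)
    qed
    moreover have "order_preserving F"
      using F by (simp add: diagonal_free_def)
    ultimately have "F (emb y) \<le> F (emb x)"
      using emb_in_Tn unfolding order_preserving_def by blast
    then have "F (emb y) i \<le> F (emb x) i"
      by (rule le_funD)
    moreover have "F (emb y) i = ereal t + F (emb z) i"
      by (rule diagonal_free_shift[OF F]) (simp add: y_def)
    moreover have "ereal (x i) \<le> ereal t + F (emb z) i"
      using add_left_mono[OF le_funD[OF eig, of i], of "ereal t"] by (simp add: t_def)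
    ultimately show "emb x i \<le> F (emb x) i"
      by (simp add: emb_def)
  qed
  then show "emb ` hilbert_ball z r \<subseteq> subeig F"
    by (auto simp: subeig_def emb_in_Tn)
qed

lemma Sup_ereal_pos_iff:
  fixes C :: "real set"
  shows "Sup (ereal ` C) > 0 \<longleftrightarrow> (\<exists>r\<in>C. r > 0)"
  by (auto simp: less_Sup_iff)

lemma Sup_ereal_nonneg_part:
  fixes C :: "real set"
  assumes "r\<^sub>0 \<in> C" "r\<^sub>0 > 0"
  shows "Sup (ereal ` {r \<in> C. r \<ge> 0}) = Sup (ereal ` C)"
proof (rule antisym)
  show "Sup (ereal ` {r \<in> C. r \<ge> 0}) \<le> Sup (ereal ` C)"
    by (rule Sup_subset_mono) auto
  have r\<^sub>0_le: "ereal r\<^sub>0 \<le> Sup (ereal ` {r \<in> C. r \<ge> 0})"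
    using assms by (intro Sup_upper) auto
  show "Sup (ereal ` C) \<le> Sup (ereal ` {r \<in> C. r \<ge> 0})"
  proof (rule Sup_least, clarify)
    fix \<mu> assume "\<mu> \<in> C"
    show "ereal \<mu> \<le> Sup (ereal ` {r \<in> C. r \<ge> 0})"
    proof (cases "\<mu> \<ge> 0")
      case True
      then show ?thesis using \<open>\<mu> \<in> C\<close> by (intro Sup_upper) auto
    next
      case False
      then have "ereal \<mu> \<le> ereal r\<^sub>0"
        using \<open>r\<^sub>0 > 0\<close> by simp
      then show ?thesis
        using r\<^sub>0_le by (rule order_trans)
    qed
  qed
qed

theorem mainTheorem6:
  fixes F :: "('n::finite \<Rightarrow> ereal) \<Rightarrow> ('n \<Rightarrow> ereal)"
  assumes "diagonal_free F"
  shows "((\<exists>z r. r > 0 \<and> emb ` hilbert_ball z r \<subseteq> subeig F) \<longleftrightarrow> lower_cw F > 0)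
    \<and> (lower_cw F > 0 \<longrightarrow>
         Sup (ereal ` {r. r \<ge> 0 \<and> (\<exists>z. emb ` hilbert_ball z r \<subseteq> subeig F)}) = lower_cw F)"
proof -
  define C where "C = {\<mu>::real. \<exists>z::'n \<Rightarrow> real. (\<lambda>i. ereal (\<mu> + z i)) \<le> F (emb z)}"
  have cw: "lower_cw F = Sup (ereal ` C)"
    by (simp add: lower_cw_def C_def)
  have radii: "{r. r \<ge> 0 \<and> (\<exists>z. emb ` hilbert_ball z r \<subseteq> subeig F)} = {r \<in> C. r \<ge> 0}"
    using hilbert_ball_subset_subeig_iff[OF assms] by (auto simp: C_def)
  have "(\<exists>z r. r > 0 \<and> emb ` hilbert_ball z r \<subseteq> subeig F)
      \<longleftrightarrow> (\<exists>r \<in> {r. r \<ge> 0 \<and> (\<exists>z. emb ` hilbert_ball z r \<subseteq> subeig F)}. r > 0)"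
    using less_imp_le by blast
  also have "\<dots> \<longleftrightarrow> (\<exists>r\<in>C. r > 0)"
    unfolding radii by auto
  finally have "(\<exists>z r. r > 0 \<and> emb ` hilbert_ball z r \<subseteq> subeig F) \<longleftrightarrow> (\<exists>r\<in>C. r > 0)" .
  moreover have "Sup (ereal ` {r \<in> C. r \<ge> 0}) = Sup (ereal ` C)" if "\<exists>r\<in>C. r > 0"
    using that by (auto intro: Sup_ereal_nonneg_part)
  ultimately show ?thesis
    by (simp add: cw radii Sup_ereal_pos_iff)
qed

end
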